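(* Let $x=(x_1,\ldots,x_n)\in[\ell]^n$ be a minimal non-crossing sequence in which exactly $\ell$ distinct values occur. Then $n\le 4\ell$.
   Context: A sequence $x\in[\ell]^n$ is non-crossing if for all $1\le i<j<k<l\le n$ we have $x_i\ne x_k$, or $x_j\ne x_l$, or $x_i=x_j=x_k=x_l$. It is minimal if there is no index $i$ with $x_i=x_{i+1}=x_{i+2}$. Here $[\ell]=\{1,\ldots,\ell\}$. *)

theory Defs
  imports Main
begin

text \<open>Sequences x in [l]^n are lists of length n with entries in {1..l};
  index i of the paper corresponds to list position i-1.\<close>

definition non_crossing :: "nat list \<Rightarrow> bool" where
  "non_crossing x \<longleftrightarrow>
     (\<forall>i j k l. i < j \<and> j < k \<and> k < l \<and> l < length x \<longrightarrow>
        x ! i \<noteq> x ! k \<or> x ! j \<noteq> x ! l \<or>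
        (x ! i = x ! j \<and> x ! j = x ! k \<and> x ! k = x ! l))"

definition minimal_seq :: "nat list \<Rightarrow> bool" where
  "minimal_seq x \<longleftrightarrow>
     \<not> (\<exists>i. i + 2 < length x \<and> x ! i = x ! (i + 1) \<and> x ! (i + 1) = x ! (i + 2))"

end

theory Submission
  imports Defs
begin

text \<open>Write x = a u a w, splitting at the second occurrence of the first letter a (or x = a u
  if a occurs only once). Taking the positions of a and of a common letter b in u and in w shows
  that non-crossing forces u and a w to have no letter in common, so the numbers of distinct
  letters add up. Induction then proves the sharper bound |x| + 3 \<le> 4 card(set x), relaxed to
  |x| + 2 when x begins with a repeated letter: that case occurs exactly when u is empty, and
  then minimality guarantees that a w itself does not begin with a repeated letter.\<close>

fun starts_with_pair :: "'a list \<Rightarrow> bool" where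
  "starts_with_pair (a # b # _) = (a = b)"
| "starts_with_pair _ = False"

lemma non_crossing_appendD:
  assumes "non_crossing (xs @ ys)"
  shows "non_crossing xs" and "non_crossing ys"
proof -
  show "non_crossing xs"
    unfolding non_crossing_def
  proof (intro allI impI)
    fix i j k l assume "i < j \<and> j < k \<and> k < l \<and> l < length xs"
    with assms[unfolded non_crossing_def, rule_format, of i j k l]
    show "xs ! i \<noteq> xs ! k \<or> xs ! j \<noteq> xs ! l \<or> (xs ! i = xs ! j \<and> xs ! j = xs ! k \<and> xs ! k = xs ! l)"
      by (auto simp: nth_append)
  qed
  show "non_crossing ys"
    unfolding non_crossing_def
  proof (intro allI impI)
    fix i j k l assume "i < j \<and> j < k \<and> k < l \<and> l < length ys"
    with assms[unfolded non_crossing_def, rule_format,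
        of "length xs + i" "length xs + j" "length xs + k" "length xs + l"]
    show "ys ! i \<noteq> ys ! k \<or> ys ! j \<noteq> ys ! l \<or> (ys ! i = ys ! j \<and> ys ! j = ys ! k \<and> ys ! k = ys ! l)"
      by (auto simp: nth_append_length_plus)
  qed
qed

lemma minimal_seq_appendD:
  assumes "minimal_seq (xs @ ys)"
  shows "minimal_seq xs" and "minimal_seq ys"
proof -
  show "minimal_seq xs"
    unfolding minimal_seq_def
  proof (rule notI, elim exE conjE)
    fix i assume "i + 2 < length xs" "xs ! i = xs ! (i + 1)" "xs ! (i + 1) = xs ! (i + 2)"
    then have "i + 2 < length (xs @ ys) \<and> (xs @ ys) ! i = (xs @ ys) ! (i + 1)
        \<and> (xs @ ys) ! (i + 1) = (xs @ ys) ! (i + 2)"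
      by (simp add: nth_append)
    with assms show False unfolding minimal_seq_def by blast
  qed
  show "minimal_seq ys"
    unfolding minimal_seq_def
  proof (rule notI, elim exE conjE)
    fix i assume "i + 2 < length ys" "ys ! i = ys ! (i + 1)" "ys ! (i + 1) = ys ! (i + 2)"
    then have "length xs + i + 2 < length (xs @ ys)
        \<and> (xs @ ys) ! (length xs + i) = (xs @ ys) ! (length xs + i + 1)
        \<and> (xs @ ys) ! (length xs + i + 1) = (xs @ ys) ! (length xs + i + 2)"
      by (simp add: nth_append)
    with assms show False unfolding minimal_seq_def by blast
  qed
qed

lemma not_minimal_seq_triple: "\<not> minimal_seq (a # a # a # t)"
  unfolding minimal_seq_def by (auto intro!: exI[of _ 0])

lemma non_crossing_disjoint_between_repeats:
  assumes "non_crossing (a # u @ a # w)"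
  shows "set u \<inter> set w \<subseteq> {a}"
proof
  fix b assume "b \<in> set u \<inter> set w"
  then obtain i j where i: "i < length u" "u ! i = b" and j: "j < length w" "w ! j = b"
    by (auto simp: in_set_conv_nth)
  let ?x = "a # u @ a # w"
  have "0 < 1 + i \<and> 1 + i < 1 + length u \<and> 1 + length u < 2 + length u + j
      \<and> 2 + length u + j < length ?x"
    using i j by simp
  with assms have "?x ! 0 \<noteq> ?x ! (1 + length u) \<or> ?x ! (1 + i) \<noteq> ?x ! (2 + length u + j)
      \<or> ?x ! 0 = ?x ! (1 + i)"
    unfolding non_crossing_def by blast
  moreover have "?x ! 0 = a" "?x ! (1 + i) = b" "?x ! (1 + length u) = a" "?x ! (2 + length u + j) = b"
    using i j by (simp_all add: nth_append)
  ultimately show "b \<in> {a}" by simp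
qed

lemma split_at_first_occurrence:
  obtains "a \<notin> set r"
  | u w where "r = u @ a # w" "a \<notin> set u"
  using split_list_first[of a r] by (cases "a \<in> set r") auto

lemma non_crossing_minimal_length_bound:
  assumes "x \<noteq> []" "non_crossing x" "minimal_seq x"
  shows "length x + (if starts_with_pair x then 2 else 3) \<le> 4 * card (set x)"
  using assms
proof (induction "length x" arbitrary: x rule: less_induct)
  case less
  have IH: "length y + (if starts_with_pair y then 2 else 3) \<le> 4 * card (set y)"
    if "length y < length x" "y \<noteq> []" "non_crossing (zs @ y)" "minimal_seq (zs @ y)" for y zs
    using less.hyps that non_crossing_appendD(2) minimal_seq_appendD(2) by blast
  obtain a r where x: "x = a # r" using \<open>x \<noteq> []\<close> by (cases x) auto
  show ?case
  proof (cases rule: split_at_first_occurrence[of a r])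
    case 1
    show ?thesis
    proof (cases "r = []")
      case False
      then have "\<not> starts_with_pair x" using 1 x by (cases r) auto
      moreover have "length r + 2 \<le> 4 * card (set r)"
        using IH[of r "[a]"] False x less.prems by (auto split: if_splits)
      ultimately show ?thesis using 1 x by simp
    qed (use x in simp)
  next
    case (2 u w)
    then have x_split: "x = (a # u) @ (a # w)" using x by simp
    have bound_aw: "length (a # w) + (if starts_with_pair (a # w) then 2 else 3)
        \<le> 4 * card (set (a # w))"
      using IH[of "a # w" "a # u"] x_split less.prems by simp
    show ?thesis
    proof (cases "u = []")
      case True
      have "\<not> starts_with_pair (a # w)"
        using less.prems(3) x_split True not_minimal_seq_triple by (cases w) auto
      then show ?thesis using bound_aw x_split True by simp
    next
      case False
      then have "\<not> starts_with_pair x" using x_split 2(2) by (cases u) auto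
      have "non_crossing ([a] @ u)" "minimal_seq ([a] @ u)"
        using less.prems(2,3) x_split non_crossing_appendD(1) minimal_seq_appendD(1) by simp_all
      then have bound_u: "length u + 2 \<le> 4 * card (set u)"
        using IH[of u "[a]"] False x_split by (simp split: if_splits)
      have "set u \<inter> set (a # w) = {}"
        using non_crossing_disjoint_between_repeats[of a u w] less.prems(2) x_split 2(2) by auto
      then have "card (set x) = card (set u) + card (set (a # w))"
        using x_split by (simp add: card_Un_disjoint[symmetric] Un_commute)
      moreover have "length x = length u + length (a # w) + 1"
        using x_split by simp
      moreover have "length (a # w) + 2 \<le> 4 * card (set (a # w))"
        using bound_aw by (simp split: if_splits)
      ultimately have "length x + 3 \<le> 4 * card (set x)"
        using bound_u by linarith
      with \<open>\<not> starts_with_pair x\<close> show ?thesis by simp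
    qed
  qed
qed

corollary non_crossing_minimal_length_le:
  assumes "non_crossing x" "minimal_seq x"
  shows "length x \<le> 4 * card (set x)"
proof (cases "x = []")
  case False
  from non_crossing_minimal_length_bound[OF False assms] show ?thesis by (simp split: if_splits)
qed simp

theorem lemma3p3:
  fixes x :: "nat list" and L :: nat
  assumes "set x \<subseteq> {1..L}"
    and "non_crossing x"
    and "minimal_seq x"
    and "card (set x) = L"
  shows "length x \<le> 4 * L"
  using non_crossing_minimal_length_le[OF assms(2,3)] assms(4) by simp

end
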